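(* A system $C=(1,c_2,c_3,c_4,2c_4-c_2)$ is canonical and its subsystem $(1,c_2,c_3,c_4)$ is noncanonical if and only if $C=(1,2,c_3,c_3+1,2c_3)$ and $c_3>3$.
   Context: A system is a tuple $C=(c_1,\dots,c_n)$ of integers with $1=c_1<c_2<\dots<c_n$; for $k\le n$, $(c_1,\dots,c_k)$ is a subsystem. For a positive integer $v$, $\mathrm{opt}_C(v)$ is the minimum of $\sum_i x_i$ over $x\in\mathbb{Z}_{\ge0}^n$ with $\sum_i c_ix_i=v$. The greedy representation of $v$ is produced by: for $i=n$ down to $1$, while $c_i\le$ remaining value, take a coin $c_i$. $\mathrm{grd}_C(v)$ is its number of coins. A positive integer $w$ is a counterexample if $\mathrm{opt}_C(w)<\mathrm{grd}_C(w)$; $C$ is canonical if it has none, noncanonical otherwise. *)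

theory Defs
  imports Main
begin

definition is_system :: "nat list \<Rightarrow> bool" where
  "is_system cs \<longleftrightarrow> cs \<noteq> [] \<and> hd cs = 1 \<and> sorted_wrt (<) cs"

definition is_rep :: "nat list \<Rightarrow> nat \<Rightarrow> nat list \<Rightarrow> bool" where
  "is_rep cs v xs \<longleftrightarrow> length xs = length cs \<and> (\<Sum>i<length cs. cs ! i * xs ! i) = v"

definition opt :: "nat list \<Rightarrow> nat \<Rightarrow> nat" where
  "opt cs v = (LEAST k. \<exists>xs. is_rep cs v xs \<and> sum_list xs = k)"

fun grd_desc :: "nat list \<Rightarrow> nat \<Rightarrow> nat" where
  "grd_desc [] v = 0"
| "grd_desc (c # cs) v = v div c + grd_desc cs (v mod c)"

definition grd :: "nat list \<Rightarrow> nat \<Rightarrow> nat" where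
  "grd cs v = grd_desc (rev cs) v"

definition counterexample :: "nat list \<Rightarrow> nat \<Rightarrow> bool" where
  "counterexample cs w \<longleftrightarrow> 0 < w \<and> opt cs w < grd cs w"

definition canonical :: "nat list \<Rightarrow> bool" where
  "canonical cs \<longleftrightarrow> (\<forall>w. \<not> counterexample cs w)"

end

theory Submission
  imports Defs
begin

(* Let w be the least counterexample of D = (1, a, b, c) and C = D @ [2c - a]. Below 2c - a the
   greedy counts of C and D agree while C's optimum is at most D's, so canonicity of C forces
   2c - a <= w; the Kozen-Zaks bound gives w < b + c, hence c < a + b. Comparing the greedy
   count of C with the two-coin representations b + c and b + b then yields c = a + b - 1 and
   a = 2 unless b = 2a - 1; in the latter case w = 5a - 4, which greedy pays with a coins and no
   representation pays with fewer.
   Conversely, for C = (1, 2, b, b + 1, 2b) adding any coin to an amount raises the greedy count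
   by at most one, and this makes greedy optimal; D = (1, 2, b, b + 1) fails at 2b = b + b. *)

lemma grd_zero [simp]: "grd cs 0 = 0"
proof -
  have "grd_desc ds 0 = 0" for ds
    by (induction ds) simp_all
  then show ?thesis
    by (simp add: grd_def)
qed

lemma grd_snoc: "grd (cs @ [c]) v = v div c + grd cs (v mod c)"
  by (simp add: grd_def)

lemma grd_snoc_add_mult: "m < c \<Longrightarrow> grd (cs @ [c]) (m + q * c) = q + grd cs m"
  by (simp add: grd_snoc)

lemma grd_snoc_ge:
  "0 < c \<Longrightarrow> c \<le> v \<Longrightarrow> grd (cs @ [c]) v = Suc (grd (cs @ [c]) (v - c))"
  by (simp add: grd_snoc le_div_geq le_mod_geq)

lemma is_rep_unique: "is_rep cs v xs \<Longrightarrow> is_rep cs u xs \<Longrightarrow> u = v"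
  by (simp add: is_rep_def)

lemma is_rep_add_coin:
  assumes "is_rep cs v xs" "i < length cs"
  shows "is_rep cs (v + cs ! i) (xs[i := Suc (xs ! i)])"
proof -
  have "(\<Sum>j<length cs. cs ! j * xs[i := Suc (xs ! i)] ! j)
      = (\<Sum>j<length cs. cs ! j * xs ! j + (if j = i then cs ! j else 0))"
    using assms by (intro sum.cong) (auto simp: is_rep_def nth_list_update)
  also have "\<dots> = v + cs ! i"
    using assms by (simp add: sum.distrib is_rep_def)
  finally show ?thesis
    using assms(1) by (simp add: is_rep_def)
qed

lemma sum_list_update_Suc:
  "i < length xs \<Longrightarrow> sum_list (xs[i := Suc (xs ! i)]) = Suc (sum_list xs)"
  by (simp add: sum_list_update elem_le_sum_list)

lemma is_rep_exists:
  assumes "1 \<in> set cs"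
  shows "\<exists>xs. is_rep cs v xs"
proof -
  obtain i where i: "i < length cs" "cs ! i = 1"
    using assms by (auto simp: in_set_conv_nth)
  have "(\<Sum>j<length cs. cs ! j * (replicate (length cs) 0)[i := v] ! j)
      = (\<Sum>j<length cs. if j = i then v else 0)"
    using i by (intro sum.cong) auto
  then have "is_rep cs v ((replicate (length cs) 0)[i := v])"
    using i(1) by (simp add: is_rep_def)
  then show ?thesis ..
qed

lemma opt_attained:
  "1 \<in> set cs \<Longrightarrow> \<exists>xs. is_rep cs v xs \<and> sum_list xs = opt cs v"
  unfolding opt_def by (rule LeastI_ex) (use is_rep_exists in blast)

lemma opt_le_sum_list: "is_rep cs v xs \<Longrightarrow> opt cs v \<le> sum_list xs"
  unfolding opt_def by (rule Least_le) blast

lemma opt_zero [simp]: "opt cs 0 = 0"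
  using opt_le_sum_list[of cs 0 "replicate (length cs) 0"]
  by (simp add: is_rep_def sum_list_replicate)

lemma opt_add_coin:
  assumes "1 \<in> set cs" "k \<in> set cs"
  shows "opt cs (v + k) \<le> Suc (opt cs v)"
proof -
  obtain xs where xs: "is_rep cs v xs" "sum_list xs = opt cs v"
    using opt_attained[OF assms(1)] by blast
  obtain i where i: "i < length cs" "cs ! i = k"
    using assms(2) by (auto simp: in_set_conv_nth)
  have "length xs = length cs"
    using xs(1) by (simp add: is_rep_def)
  then show ?thesis
    using opt_le_sum_list[OF is_rep_add_coin[OF xs(1) i(1)]] i xs(2)
    by (simp add: sum_list_update_Suc)
qed

lemma opt_add_coins:
  assumes "1 \<in> set cs" "k \<in> set cs"
  shows "opt cs (v + k * j) \<le> opt cs v + j"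
proof (induction j)
  case (Suc j)
  have "opt cs (v + k * Suc j) = opt cs ((v + k * j) + k)"
    by (simp add: algebra_simps)
  also have "\<dots> \<le> Suc (opt cs (v + k * j))"
    by (rule opt_add_coin[OF assms])
  also have "\<dots> \<le> opt cs v + Suc j"
    using Suc by simp
  finally show ?case .
qed simp

lemma opt_sum_list_le:
  assumes "1 \<in> set cs" "set ks \<subseteq> set cs"
  shows "opt cs (sum_list ks) \<le> length ks"
  using assms(2)
proof (induction ks)
  case (Cons k ks)
  then show ?case
    using opt_add_coin[OF assms(1), of k "sum_list ks"] by (simp add: add.commute)
qed simp

lemma opt_remove_coin:
  assumes "1 \<in> set cs" "0 < v"
  shows "\<exists>k\<in>set cs. k \<le> v \<and> Suc (opt cs (v - k)) \<le> opt cs v"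
proof -
  obtain xs where xs: "is_rep cs v xs" "sum_list xs = opt cs v"
    using opt_attained[OF assms(1)] by blast
  have len: "length xs = length cs"
    using xs(1) by (simp add: is_rep_def)
  obtain i where i: "i < length cs" "0 < xs ! i"
  proof -
    have "(\<Sum>j<length cs. cs ! j * xs ! j) \<noteq> 0"
      using xs(1) assms(2) by (simp add: is_rep_def)
    then obtain j where "j < length cs" "cs ! j * xs ! j \<noteq> 0"
      by (meson lessThan_iff sum.neutral)
    then show ?thesis
      using that by simp
  qed
  define ys where "ys = xs[i := xs ! i - 1]"
  define u where "u = (\<Sum>j<length cs. cs ! j * ys ! j)"
  have ys: "is_rep cs u ys"
    using len by (simp add: is_rep_def u_def ys_def)
  have xs_ys: "xs = ys[i := Suc (ys ! i)]"
    using i len by (simp add: ys_def)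
  have "v = u + cs ! i"
    using is_rep_unique[OF xs(1)] is_rep_add_coin[OF ys i(1)] xs_ys by simp
  moreover have "sum_list xs = Suc (sum_list ys)"
    unfolding xs_ys using i(1) len by (intro sum_list_update_Suc) (simp add: ys_def)
  ultimately show ?thesis
    using opt_le_sum_list[OF ys] i(1) xs(2) by (intro bexI[of _ "cs ! i"]) auto
qed

lemma opt_snoc_le:
  assumes "1 \<in> set cs"
  shows "opt (cs @ [c]) v \<le> opt cs v"
proof -
  obtain xs where xs: "is_rep cs v xs" "sum_list xs = opt cs v"
    using opt_attained[OF assms] by blast
  have "is_rep (cs @ [c]) v (xs @ [0])"
    using xs(1) by (simp add: is_rep_def nth_append)
  then show ?thesis
    using opt_le_sum_list xs(2) by fastforce
qed

lemma opt_le_grd: "1 \<in> set cs \<Longrightarrow> opt cs v \<le> grd cs v"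
proof (induction cs arbitrary: v rule: rev_induct)
  case (snoc c cs)
  have "opt (cs @ [c]) v = opt (cs @ [c]) (v mod c + c * (v div c))"
    by simp
  also have "\<dots> \<le> opt (cs @ [c]) (v mod c) + v div c"
    using snoc.prems by (intro opt_add_coins) auto
  also have "opt (cs @ [c]) (v mod c) \<le> grd cs (v mod c)"
  proof (cases "1 \<in> set cs")
    case True
    then show ?thesis
      using opt_snoc_le snoc.IH order.trans by blast
  next
    case False
    \<comment> \<open>then c = 1 and v mod c = 0\<close>
    then show ?thesis
      using snoc.prems by auto
  qed
  finally show ?case
    by (simp add: grd_snoc)
qed simp

lemma is_system_one: "is_system cs \<Longrightarrow> 1 \<in> set cs"
  by (cases cs) (auto simp: is_system_def)

lemma is_system_pos: "is_system cs \<Longrightarrow> k \<in> set cs \<Longrightarrow> 0 < k"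
  by (cases cs) (auto simp: is_system_def)

lemma canonical_iff_grd_le_opt: "canonical cs \<longleftrightarrow> (\<forall>v. grd cs v \<le> opt cs v)"
  unfolding canonical_def counterexample_def by (metis grd_zero le0 not_gr0 not_le)

lemma canonical_if_grd_add_coin_le:
  assumes "1 \<in> set cs"
    and step: "\<And>k v. k \<in> set cs \<Longrightarrow> grd cs (v + k) \<le> Suc (grd cs v)"
  shows "canonical cs"
  unfolding canonical_iff_grd_le_opt
proof
  fix v
  show "grd cs v \<le> opt cs v"
  proof (induction v rule: less_induct)
    case (less v)
    show ?case
    proof (cases "v = 0")
      case False
      then obtain k where k: "k \<in> set cs" "k \<le> v" "Suc (opt cs (v - k)) \<le> opt cs v"
        using opt_remove_coin[OF assms(1)] by blast
      have "0 < k"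
        using k(3) by (cases "k = 0") auto
      have "grd cs v = grd cs ((v - k) + k)"
        using k(2) by simp
      also have "\<dots> \<le> Suc (grd cs (v - k))"
        by (rule step[OF k(1)])
      also have "\<dots> \<le> Suc (opt cs (v - k))"
        using less \<open>0 < k\<close> False by simp
      also have "\<dots> \<le> opt cs v"
        by (rule k(3))
      finally show ?thesis .
    qed simp
  qed
qed

lemma counterexample_ge_if_canonical_snoc:
  assumes "canonical (cs @ [d])" "1 \<in> set cs" "counterexample cs w"
  shows "d \<le> w"
proof (rule ccontr)
  assume "\<not> d \<le> w"
  then have "grd (cs @ [d]) w = grd cs w"
    by (simp add: grd_snoc)
  moreover have "opt (cs @ [d]) w \<le> opt cs w"
    by (rule opt_snoc_le[OF assms(2)])
  ultimately show False
    using assms(1,3) unfolding canonical_iff_grd_le_opt counterexample_def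
    by (metis leD order.trans)
qed

lemma minimal_counterexample_less:
  assumes sys: "is_system (cs @ [b, c])"
    and w: "counterexample (cs @ [b, c]) w"
    and minimal: "\<And>v. v < w \<Longrightarrow> \<not> counterexample (cs @ [b, c]) v"
  shows "w < b + c"
proof (rule ccontr)
  define S where "S = cs @ [b, c]"
  assume "\<not> w < b + c"
  then have "b + c \<le> w"
    by simp
  have one: "1 \<in> set S"
    using is_system_one[OF sys] by (simp add: S_def)
  have "0 < b" "b < c"
    using sys is_system_pos[OF sys, of b] by (auto simp: is_system_def sorted_wrt_append)
  have small_coins: "k \<le> b" if "k \<in> set S" "k \<noteq> c" for k
    using sys that by (auto simp: S_def is_system_def sorted_wrt_append)
  have grd_S: "grd S v = Suc (grd S (v - c))" if "c \<le> v" for v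
    using grd_snoc_ge[of c v "cs @ [b]"] that \<open>b < c\<close> by (simp add: S_def)
  obtain k where k: "k \<in> set S" "k \<le> w" "Suc (opt S (w - k)) \<le> opt S w"
    using opt_remove_coin[OF one] w by (auto simp: S_def counterexample_def)
  have opt_w: "opt S w < grd S w"
    using w by (simp add: S_def counterexample_def)
  have "opt S (w - c) < grd S (w - c)"
  proof (cases "k = c")
    case True
    then show ?thesis
      using k(3) opt_w grd_S[of w] \<open>b + c \<le> w\<close> by simp
  next
    case False
    then have "0 < k" "k \<le> b"
      using is_system_pos[OF sys] small_coins k(1) by (auto simp: S_def)
    have "\<not> counterexample S (w - k)"
      using minimal \<open>0 < k\<close> k(2) \<open>b + c \<le> w\<close> by (simp add: S_def)
    then have grd_le: "grd S (w - k) \<le> opt S (w - k)"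
      using \<open>k \<le> b\<close> \<open>b + c \<le> w\<close> \<open>b < c\<close> by (simp add: counterexample_def)
    have "opt S (w - c) = opt S ((w - k - c) + k)"
      using \<open>k \<le> b\<close> \<open>b + c \<le> w\<close> by simp
    also have "\<dots> \<le> Suc (opt S (w - k - c))"
      using opt_add_coin[OF one k(1)] .
    also have "\<dots> \<le> Suc (grd S (w - k - c))"
      using opt_le_grd[OF one] by simp
    also have "\<dots> = grd S (w - k)"
      using grd_S[of "w - k"] \<open>k \<le> b\<close> \<open>b + c \<le> w\<close> by simp
    finally show ?thesis
      using grd_le k(3) opt_w grd_S[of w] \<open>b + c \<le> w\<close> by simp
  qed
  moreover have "0 < w - c" "w - c < w"
    using \<open>0 < b\<close> \<open>b < c\<close> \<open>b + c \<le> w\<close> by simp_all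
  ultimately show False
    using minimal[of "w - c"] by (simp add: S_def counterexample_def)
qed

(* The coins are 1 + k (a - 1) for k = 0..3: with S coins whose k sum to T we get
   S + (a - 1) T = 5 (a - 1) + 1 and T <= 3 S. *)
lemma coin_count_5a_4_ge:
  fixes a x1 x2 x3 x4 :: nat
  assumes "2 \<le> a" "x1 + a * x2 + (2 * a - 1) * x3 + (3 * a - 2) * x4 = 5 * a - 4"
  shows "a \<le> x1 + x2 + x3 + x4"
proof -
  obtain e where a: "a = Suc e" "1 \<le> e"
    using assms(1) by (cases a) auto
  define S where "S = x1 + x2 + x3 + x4"
  define T where "T = x2 + 2 * x3 + 3 * x4"
  have eq: "S + e * T = 5 * e + 1"
    using assms(2) unfolding a S_def T_def by (simp add: algebra_simps)
  have "T \<le> 4"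
  proof (rule ccontr)
    assume "\<not> T \<le> 4"
    then have "5 * e \<le> e * T"
      by (simp add: mult.commute)
    then have "S \<le> 1"
      using eq by linarith
    moreover have "T \<le> 3 * S"
      unfolding S_def T_def by simp
    ultimately show False
      using \<open>\<not> T \<le> 4\<close> by linarith
  qed
  then have "e * T \<le> 4 * e"
    by (simp add: mult.commute)
  then show ?thesis
    using eq a(1) unfolding S_def by linarith
qed

lemma not_counterexample_5a_4:
  assumes "2 \<le> a"
  shows "\<not> counterexample [1, a, 2 * a - 1, 3 * a - 2] (5 * a - 4)"
proof
  define D where "D = [1, a, 2 * a - 1, 3 * a - 2]"
  assume "counterexample [1, a, 2 * a - 1, 3 * a - 2] (5 * a - 4)"
  then have lt: "opt D (5 * a - 4) < grd D (5 * a - 4)"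
    by (simp add: D_def counterexample_def)
  obtain xs where xs: "is_rep D (5 * a - 4) xs" "sum_list xs = opt D (5 * a - 4)"
    using opt_attained[of D] by (auto simp: D_def)
  then obtain x1 x2 x3 x4 where "xs = [x1, x2, x3, x4]"
    by (auto simp: is_rep_def D_def length_Suc_conv numeral_eq_Suc)
  then have "a \<le> opt D (5 * a - 4)"
    using xs assms coin_count_5a_4_ge[of a x1 x2 x3 x4]
    by (simp add: is_rep_def D_def lessThan_Suc numeral_eq_Suc algebra_simps)
  moreover have "(5 * a - 4) div (3 * a - 2) = 1" "(5 * a - 4) mod (3 * a - 2) = 2 * a - 2"
    "(2 * a - 2) div (2 * a - 1) = 0" "(2 * a - 2) mod (2 * a - 1) = 2 * a - 2"
    "(2 * a - 2) div a = 1" "(2 * a - 2) mod a = a - 2"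
    using assms by (simp_all add: le_div_geq le_mod_geq)
  then have "grd D (5 * a - 4) = a"
    using assms by (simp add: D_def grd_def) linarith
  ultimately show False
    using lt by simp
qed

lemma canonical_extension_imp_counterexample:
  assumes sys: "is_system [1, a, b, c, 2 * c - a]"
    and canC: "canonical [1, a, b, c, 2 * c - a]"
    and ncD: "\<not> canonical [1, a, b, c]"
  shows "c = a + b - 1 \<and> counterexample [1, a, b, c] (2 * c - a)"
proof -
  define D where "D = [1, a, b, c]"
  define d where "d = 2 * c - a"
  have ord: "1 < a" "a < b" "b < c"
    using sys by (simp_all add: is_system_def)
  define w where "w = (LEAST w. counterexample D w)"
  have w: "counterexample D w"
    using ncD unfolding w_def D_def canonical_def by (blast intro: LeastI)
  have minimal: "\<not> counterexample D v" if "v < w" for v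
    using not_less_Least[OF that[unfolded w_def]] .
  have "d \<le> w"
    using counterexample_ge_if_canonical_snoc[of D d w] canC w by (simp add: D_def d_def)
  moreover have "w < b + c"
    using minimal_counterexample_less[of "[1, a]" b c w] sys w minimal
    by (simp add: D_def is_system_def)
  ultimately have "c < a + b"
    unfolding d_def by linarith
  have "grd (D @ [d]) (b + c) \<le> opt (D @ [d]) (b + c)"
    using canC by (simp add: canonical_iff_grd_le_opt D_def d_def)
  also have "\<dots> \<le> 2"
    using opt_sum_list_le[of "D @ [d]" "[b, c]"] by (simp add: D_def)
  finally have "grd (D @ [d]) (b + c) \<le> 2" .
  moreover have "(b + c) div d = 1" "(b + c) mod d = a + b - c"
    using \<open>c < a + b\<close> ord by (simp_all add: d_def le_div_geq le_mod_geq)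
  then have "grd (D @ [d]) (b + c) = 1 + (a + b - c)"
    using \<open>c < a + b\<close> ord by (simp add: D_def grd_def)
  ultimately have "c = a + b - 1"
    using \<open>c < a + b\<close> by linarith
  moreover have "w = d"
    using \<open>d \<le> w\<close> \<open>w < b + c\<close> \<open>c = a + b - 1\<close> ord unfolding d_def by linarith
  ultimately show ?thesis
    using w by (simp add: D_def d_def)
qed

lemma two_le_div_add_mod:
  fixes t a :: nat
  assumes "2 \<le> t" "t \<noteq> a"
  shows "2 \<le> t div a + t mod a"
proof (rule ccontr)
  assume "\<not> 2 \<le> t div a + t mod a"
  then consider "t div a = 0" "t mod a \<le> 1" | "t div a = 1" "t mod a = 0"
    by linarith
  moreover have "t = a * (t div a) + t mod a"
    by simp
  ultimately show False
    using assms by cases auto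
qed

lemma canonical_extension_imp_a_eq_2:
  assumes sys: "is_system [1, a, b, c, 2 * c - a]"
    and canC: "canonical [1, a, b, c, 2 * c - a]"
    and c: "c = a + b - 1"
  shows "a = 2 \<or> b = 2 * a - 1"
proof (rule ccontr)
  define C where "C = [1, a, b, c, 2 * c - a]"
  assume "\<not> (a = 2 \<or> b = 2 * a - 1)"
  moreover have "1 < a" "a < b"
    using sys by (simp_all add: is_system_def)
  ultimately have "3 \<le> a" "b - a + 1 \<noteq> a"
    by linarith+
  \<comment> \<open>2b lies below the largest coin, and greedy pays it as c + (b - a + 1)\<close>
  have "2 \<le> (b - a + 1) div a + (b - a + 1) mod a"
    using \<open>a < b\<close> \<open>b - a + 1 \<noteq> a\<close> by (intro two_le_div_add_mod) auto
  moreover have "(2 * b) div c = 1" "(2 * b) mod c = b - a + 1"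
    using c \<open>3 \<le> a\<close> \<open>a < b\<close> by (simp_all add: le_div_geq le_mod_geq)
  ultimately have "3 \<le> grd C (2 * b)"
    using c \<open>3 \<le> a\<close> \<open>a < b\<close> by (simp add: C_def grd_def)
  moreover have "grd C (2 * b) \<le> opt C (2 * b)"
    using canC by (simp add: canonical_iff_grd_le_opt C_def)
  moreover have "opt C (2 * b) \<le> 2"
    using opt_sum_list_le[of C "[b, b]"] by (simp add: C_def mult_2)
  ultimately show False
    by linarith
qed

lemma canonical_extension_of_noncanonical:
  assumes sys: "is_system [1, a, b, c, 2 * c - a]"
    and canC: "canonical [1, a, b, c, 2 * c - a]"
    and ncD: "\<not> canonical [1, a, b, c]"
  shows "a = 2 \<and> c = b + 1 \<and> 3 < b"
proof -
  have "1 < a" "a < b"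
    using sys by (simp_all add: is_system_def)
  obtain c_eq: "c = a + b - 1" and w: "counterexample [1, a, b, c] (2 * c - a)"
    using canonical_extension_imp_counterexample[OF assms] by blast
  have "b \<noteq> 2 * a - 1"
  proof
    assume "b = 2 * a - 1"
    then have "[1, a, b, c] = [1, a, 2 * a - 1, 3 * a - 2]" "2 * c - a = 5 * a - 4"
      using c_eq \<open>1 < a\<close> by simp_all
    with w not_counterexample_5a_4[of a] \<open>1 < a\<close> show False
      by simp
  qed
  moreover have "a = 2 \<or> b = 2 * a - 1"
    using canonical_extension_imp_a_eq_2[OF sys canC c_eq] .
  ultimately show ?thesis
    using c_eq \<open>a < b\<close> by (intro conjI) linarith+
qed

lemma div_2_add_mod_2: "u div 2 + u mod 2 = (u + 1) div 2" for u :: nat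
  by presburger

lemma grd_1_2_b_Suc_b:
  assumes "2 \<le> b" "m < 2 * b"
  shows "grd [1, 2, b, b + 1] m
    = (if m < b then (m + 1) div 2 else if m = b then 1 else 1 + (m - b) div 2)"
proof -
  consider "m < b" | "m = b" | "b < m"
    by linarith
  then show ?thesis
  proof cases
    case 3
    then have "m div (b + 1) = 1" "m mod (b + 1) = m - b - 1" "m - b - 1 < b"
      using assms by (simp_all add: le_div_geq le_mod_geq)
    then show ?thesis
      using 3 by (simp add: grd_def div_2_add_mod_2)
  qed (use assms in \<open>simp_all add: grd_def div_2_add_mod_2\<close>)
qed

lemma grd_1_2_b_Suc_b_add_coin:
  assumes "3 \<le> b" "m < 2 * b" "k \<in> {1, 2, b, b + 1}"
  shows "if m + k < 2 * b then grd [1, 2, b, b + 1] (m + k) \<le> Suc (grd [1, 2, b, b + 1] m)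
    else grd [1, 2, b, b + 1] (m + k - 2 * b) \<le> grd [1, 2, b, b + 1] m"
  using assms grd_1_2_b_Suc_b[of b m] grd_1_2_b_Suc_b[of b "m + k"]
    grd_1_2_b_Suc_b[of b "m + k - 2 * b"]
  by auto presburger+

lemma grd_1_2_b_Suc_b_2b_add_coin:
  assumes "3 \<le> b" "k \<in> set [1, 2, b, b + 1, 2 * b]"
  shows "grd [1, 2, b, b + 1, 2 * b] (v + k) \<le> Suc (grd [1, 2, b, b + 1, 2 * b] v)"
proof -
  define D where "D = [1, 2, b, b + 1]"
  define q where "q = v div (2 * b)"
  define m where "m = v mod (2 * b)"
  have m: "m < 2 * b"
    using assms(1) by (simp add: m_def)
  have "v = m + q * (2 * b)"
    by (simp add: q_def m_def mod_div_mult_eq)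
  then have grd_v: "grd (D @ [2 * b]) v = q + grd D m"
    using grd_snoc_add_mult[OF m] by simp
  consider "k = 2 * b" | "k \<in> {1, 2, b, b + 1}" "k < 2 * b"
    using assms by auto
  then have "grd (D @ [2 * b]) (v + k) \<le> Suc (grd (D @ [2 * b]) v)"
  proof cases
    case 1
    then have vk: "v + k = m + Suc q * (2 * b)"
      using \<open>v = m + q * (2 * b)\<close> by simp
    then show ?thesis
      unfolding vk grd_v grd_snoc_add_mult[OF m] by simp
  next
    case 2
    note step = grd_1_2_b_Suc_b_add_coin[OF assms(1) m 2(1), folded D_def]
    show ?thesis
    proof (cases "m + k < 2 * b")
      case True
      then have vk: "v + k = (m + k) + q * (2 * b)"
        using \<open>v = m + q * (2 * b)\<close> by simp
      then show ?thesis
        unfolding vk grd_v grd_snoc_add_mult[OF True] using True step by simp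
    next
      case False
      then have vk: "v + k = (m + k - 2 * b) + Suc q * (2 * b)" and wrap: "m + k - 2 * b < 2 * b"
        using \<open>v = m + q * (2 * b)\<close> 2 m by simp_all
      then show ?thesis
        unfolding vk grd_v grd_snoc_add_mult[OF wrap] using False step by simp
    qed
  qed
  then show ?thesis
    by (simp add: D_def)
qed

lemma canonical_1_2_b_Suc_b_2b:
  assumes "3 \<le> b"
  shows "canonical [1, 2, b, b + 1, 2 * b]"
proof (rule canonical_if_grd_add_coin_le)
  show "\<And>k v. k \<in> set [1, 2, b, b + 1, 2 * b] \<Longrightarrow>
      grd [1, 2, b, b + 1, 2 * b] (v + k) \<le> Suc (grd [1, 2, b, b + 1, 2 * b] v)"
    by (rule grd_1_2_b_Suc_b_2b_add_coin[OF assms])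
qed simp

lemma not_canonical_1_2_b_Suc_b:
  assumes "4 \<le> b"
  shows "\<not> canonical [1, 2, b, b + 1]"
proof -
  have "opt [1, 2, b, b + 1] (2 * b) \<le> 2"
    using opt_sum_list_le[of "[1, 2, b, b + 1]" "[b, b]"] by (simp add: mult_2)
  moreover have "(2 * b) div (b + 1) = 1" "(2 * b) mod (b + 1) = b - 1"
    using assms by (simp_all add: le_div_geq le_mod_geq)
  then have "3 \<le> grd [1, 2, b, b + 1] (2 * b)"
    using assms by (simp add: grd_def div_2_add_mod_2)
  ultimately have "opt [1, 2, b, b + 1] (2 * b) < grd [1, 2, b, b + 1] (2 * b)"
    by linarith
  then show ?thesis
    unfolding canonical_iff_grd_le_opt using leD by blast
qed

theorem corollary3:
  fixes c2 c3 c4 :: nat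
  assumes "is_system [1, c2, c3, c4, 2 * c4 - c2]"
  shows "(canonical [1, c2, c3, c4, 2 * c4 - c2] \<and> \<not> canonical [1, c2, c3, c4])
         \<longleftrightarrow> (c2 = 2 \<and> c4 = c3 + 1 \<and> 2 * c4 - c2 = 2 * c3 \<and> c3 > 3)"
proof
  assume "canonical [1, c2, c3, c4, 2 * c4 - c2] \<and> \<not> canonical [1, c2, c3, c4]"
  then show "c2 = 2 \<and> c4 = c3 + 1 \<and> 2 * c4 - c2 = 2 * c3 \<and> c3 > 3"
    using canonical_extension_of_noncanonical[OF assms] by simp
next
  assume "c2 = 2 \<and> c4 = c3 + 1 \<and> 2 * c4 - c2 = 2 * c3 \<and> c3 > 3"
  then have "[1, c2, c3, c4] = [1, 2, c3, c3 + 1]" "2 * c4 - c2 = 2 * c3" "4 \<le> c3"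
    by simp_all
  then show "canonical [1, c2, c3, c4, 2 * c4 - c2] \<and> \<not> canonical [1, c2, c3, c4]"
    using canonical_1_2_b_Suc_b_2b[of c3] not_canonical_1_2_b_Suc_b[of c3] by simp
qed

end
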